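(* Let $R$ be an integral domain with $R\neq K_R$. Assume there is a non-trivial real-valued additive valuation $\nu$ of $K_R$ with $\nu(r)\ge0$ for all $r\in R$. Then $K_R$, as an $R$-algebra, is not strongly simple.
   Context: $K_R$ is the field of fractions of $R$. An $R$-submodule $M$ of an $R$-algebra $\mathcal A$ is a (two-sided) Mathieu subspace if whenever $a\in\mathcal A$ satisfies $a^m\in M$ for all $m\ge1$, then for all $b,c\in\mathcal A$ there is $N$ with $ba^mc\in M$ for all $m\ge N$. $\mathcal A$ is strongly simple if its only Mathieu subspaces are $0$ and $\mathcal A$. A non-trivial real-valued additive valuation is a map $\nu:K_R^\times\to\mathbb R$ (extended by $\nu(0)=\infty$) with $\nu(xy)=\nu(x)+\nu(y)$, $\nu(x+y)\ge\min(\nu(x),\nu(y))$, not identically zero on $K_R^\times$. *)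

theory Defs
  imports "HOL-Computational_Algebra.Polynomial_Factorial"
begin

text \<open>R is modelled as the type 'a :: idom; its field of fractions K_R is 'a fract,
  with R embedded via to_fract (x = Fract x 1). The R-algebra structure on K_R is
  r . q = to_fract r * q.\<close>

definition R_submodule :: "('a::idom) fract set \<Rightarrow> bool" where
  "R_submodule M \<longleftrightarrow> 0 \<in> M \<and> (\<forall>x\<in>M. \<forall>y\<in>M. x + y \<in> M)
     \<and> (\<forall>r::'a. \<forall>x\<in>M. to_fract r * x \<in> M)"

definition mathieu_subspace :: "('a::idom) fract set \<Rightarrow> bool" where
  "mathieu_subspace M \<longleftrightarrow> R_submodule M \<and>
     (\<forall>a. (\<forall>m::nat. m \<ge> 1 \<longrightarrow> a ^ m \<in> M) \<longrightarrow>
        (\<forall>b c. \<exists>N. \<forall>m\<ge>N. b * a ^ m * c \<in> M))"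

definition strongly_simple_fract :: "'a::idom itself \<Rightarrow> bool" where
  "strongly_simple_fract _ \<longleftrightarrow>
     (\<forall>M :: 'a fract set. mathieu_subspace M \<longrightarrow> M = {0} \<or> M = UNIV)"

text \<open>A non-trivial real-valued additive valuation of K_R, given by its values on
  nonzero elements (nu 0 = infinity is implicit: conditions only involve nonzero arguments).\<close>

definition nontrivial_valuation :: "(('a::idom) fract \<Rightarrow> real) \<Rightarrow> bool" where
  "nontrivial_valuation \<nu> \<longleftrightarrow>
     (\<forall>x y. x \<noteq> 0 \<longrightarrow> y \<noteq> 0 \<longrightarrow> \<nu> (x * y) = \<nu> x + \<nu> y)
   \<and> (\<forall>x y. x \<noteq> 0 \<longrightarrow> y \<noteq> 0 \<longrightarrow> x + y \<noteq> 0 \<longrightarrow> \<nu> (x + y) \<ge> min (\<nu> x) (\<nu> y))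
   \<and> (\<exists>x. x \<noteq> 0 \<and> \<nu> x \<noteq> 0)"

end

theory Submission
  imports Defs
begin

text \<open>The elements of positive value (together with 0) form an R-submodule of K_R, since
  \<open>\<nu>\<close> is non-negative on R. It is a Mathieu subspace for a strong reason: if \<open>\<nu> a > 0\<close> then
  \<open>\<nu> (b a^m c) = \<nu> b + m \<nu> a + \<nu> c\<close> becomes positive for large m. It does not contain 1,
  and it is non-zero because of x and 1/x one has positive value whenever \<open>\<nu> x \<noteq> 0\<close>.\<close>

lemma nontrivial_valuation_mult:
  "nontrivial_valuation \<nu> \<Longrightarrow> x \<noteq> 0 \<Longrightarrow> y \<noteq> 0 \<Longrightarrow> \<nu> (x * y) = \<nu> x + \<nu> y"
  unfolding nontrivial_valuation_def by blast

lemma nontrivial_valuation_add: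
  "nontrivial_valuation \<nu> \<Longrightarrow> x \<noteq> 0 \<Longrightarrow> y \<noteq> 0 \<Longrightarrow> x + y \<noteq> 0 \<Longrightarrow>
    \<nu> (x + y) \<ge> min (\<nu> x) (\<nu> y)"
  unfolding nontrivial_valuation_def by blast

lemma nontrivial_valuation_one: "nontrivial_valuation \<nu> \<Longrightarrow> \<nu> 1 = 0"
  using nontrivial_valuation_mult[of \<nu> 1 1] by simp

lemma nontrivial_valuation_power:
  assumes "nontrivial_valuation \<nu>" and "a \<noteq> 0"
  shows "\<nu> (a ^ m) = real m * \<nu> a"
  by (induction m)
    (simp_all add: assms nontrivial_valuation_one nontrivial_valuation_mult algebra_simps)

lemma nontrivial_valuation_inverse:
  "nontrivial_valuation \<nu> \<Longrightarrow> x \<noteq> 0 \<Longrightarrow> \<nu> (inverse x) = - \<nu> x"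
  using nontrivial_valuation_mult[of \<nu> x "inverse x"] nontrivial_valuation_one[of \<nu>] by simp

definition valuation_ideal :: "(('a::idom) fract \<Rightarrow> real) \<Rightarrow> 'a fract set" where
  "valuation_ideal \<nu> = {x. x = 0 \<or> \<nu> x > 0}"

lemma R_submodule_valuation_ideal:
  assumes val: "nontrivial_valuation \<nu>"
    and nonneg: "\<forall>r::'a. r \<noteq> 0 \<longrightarrow> \<nu> (to_fract r) \<ge> 0"
  shows "R_submodule (valuation_ideal (\<nu> :: 'a::idom fract \<Rightarrow> real))"
  unfolding R_submodule_def
proof (intro conjI ballI allI)
  show "0 \<in> valuation_ideal \<nu>" by (simp add: valuation_ideal_def)
next
  fix x y assume x: "x \<in> valuation_ideal \<nu>" and y: "y \<in> valuation_ideal \<nu>"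
  show "x + y \<in> valuation_ideal \<nu>"
  proof (cases "x = 0 \<or> y = 0 \<or> x + y = 0")
    case False
    then have "\<nu> (x + y) \<ge> min (\<nu> x) (\<nu> y)" using nontrivial_valuation_add[OF val] by blast
    then show ?thesis using x y False by (auto simp: valuation_ideal_def)
  qed (use x y in \<open>auto simp: valuation_ideal_def\<close>)
next
  fix r :: 'a and x assume x: "x \<in> valuation_ideal \<nu>"
  show "to_fract r * x \<in> valuation_ideal \<nu>"
  proof (cases "r = 0 \<or> x = 0")
    case False
    then have "\<nu> (to_fract r * x) = \<nu> (to_fract r) + \<nu> x"
      using nontrivial_valuation_mult[OF val] by simp
    then show ?thesis using x False nonneg by (force simp: valuation_ideal_def)
  qed (auto simp: valuation_ideal_def)
qed

lemma valuation_ideal_absorbs_powers: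
  assumes val: "nontrivial_valuation \<nu>" and a: "a \<in> valuation_ideal \<nu>"
  shows "\<exists>N. \<forall>m\<ge>N. b * a ^ m * c \<in> valuation_ideal \<nu>"
proof (cases "a = 0 \<or> b = 0 \<or> c = 0")
  case True
  then have "\<forall>m\<ge>1. b * a ^ m * c \<in> valuation_ideal \<nu>" by (auto simp: valuation_ideal_def)
  then show ?thesis by blast
next
  case False
  then have pos: "\<nu> a > 0" using a by (auto simp: valuation_ideal_def)
  obtain N :: nat where N: "- (\<nu> b + \<nu> c) < real N * \<nu> a"
    using reals_Archimedean3[OF pos] by blast
  have "b * a ^ m * c \<in> valuation_ideal \<nu>" if "m \<ge> N" for m
  proof -
    have "\<nu> (b * a ^ m * c) = \<nu> b + real m * \<nu> a + \<nu> c"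
      using False by (simp add: nontrivial_valuation_mult[OF val] nontrivial_valuation_power[OF val])
    moreover have "real N * \<nu> a \<le> real m * \<nu> a"
      using that pos by (simp add: mult_right_mono)
    ultimately show ?thesis using N by (simp add: valuation_ideal_def)
  qed
  then show ?thesis by blast
qed

lemma mathieu_subspace_valuation_ideal:
  assumes "nontrivial_valuation \<nu>"
    and "\<forall>r::'a. r \<noteq> 0 \<longrightarrow> \<nu> (to_fract r) \<ge> 0"
  shows "mathieu_subspace (valuation_ideal (\<nu> :: 'a::idom fract \<Rightarrow> real))"
  unfolding mathieu_subspace_def
  using R_submodule_valuation_ideal[OF assms] valuation_ideal_absorbs_powers[OF assms(1)]
  by force

lemma one_notin_valuation_ideal: "nontrivial_valuation \<nu> \<Longrightarrow> 1 \<notin> valuation_ideal \<nu>"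
  by (simp add: valuation_ideal_def nontrivial_valuation_one)

lemma valuation_ideal_nonzero:
  assumes val: "nontrivial_valuation \<nu>"
  shows "valuation_ideal \<nu> \<noteq> {0}"
proof -
  obtain x where x: "x \<noteq> 0" "\<nu> x \<noteq> 0"
    using val unfolding nontrivial_valuation_def by blast
  then have "\<nu> x > 0 \<or> \<nu> (inverse x) > 0"
    using nontrivial_valuation_inverse[OF val] by force
  then have "x \<in> valuation_ideal \<nu> \<or> inverse x \<in> valuation_ideal \<nu>"
    unfolding valuation_ideal_def by blast
  moreover have "inverse x \<noteq> 0" using x by simp
  ultimately show ?thesis using x by blast
qed

theorem lemma6p6:
  fixes \<nu> :: "('a::idom) fract \<Rightarrow> real"
  assumes "\<not> surj (to_fract :: 'a \<Rightarrow> 'a fract)"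
    and "nontrivial_valuation \<nu>"
    and "\<forall>r::'a. r \<noteq> 0 \<longrightarrow> \<nu> (to_fract r) \<ge> 0"
  shows "\<not> strongly_simple_fract TYPE('a)"
proof
  assume "strongly_simple_fract TYPE('a)"
  then have "valuation_ideal \<nu> = {0} \<or> valuation_ideal \<nu> = UNIV"
    using mathieu_subspace_valuation_ideal[OF assms(2,3)]
    unfolding strongly_simple_fract_def by blast
  moreover have "1 \<notin> valuation_ideal \<nu>"
    using one_notin_valuation_ideal[OF assms(2)] .
  ultimately show False
    using valuation_ideal_nonzero[OF assms(2)] by simp
qed

end
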